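(* Consider stochastic momentum gradient descent on a 2-layer diagonal linear network as described in the context, and assume that the iterates $(u_k,v_k)$ converge to $(u_\infty,v_\infty)$, that $\Delta_\infty=|u_\infty^2-v_\infty^2|$ has nonzero coordinates, and that no coordinate of $w_{\pm,k}$ is ever exactly zero. Then the two series $$S_\pm=\frac{1}{1-\beta}\sum_{k=1}^\infty\Big[r\Big(\frac{w_{\pm,k+1}}{w_{\pm,k}}\Big)+\beta\,r\Big(\frac{w_{\pm,k}}{w_{\pm,k+1}}\Big)\Big]$$ converge to finite vectors, where $r(z)=(z-1)-\ln|z|$ for $z\neq0$ (applied coordinate-wise).
   Context: Data $x_1,\dots,x_n\in\mathbb{R}^d$, $y\in\mathbb{R}^n$. For a batch $\mathcal{B}\subset[n]$ of size $B$, $L_{\mathcal B}(\theta)=\frac{1}{2B}\sum_{i\in\mathcal B}(y_i-\langle x_i,\theta\rangle)^2$. Vector operations are coordinate-wise. Stochastic momentum gradient descent with step size $\gamma>0$, momentum $\beta\in[0,1)$ and batches $\mathcal{B}_k\subset[n]$ of size $B\in[n]$ (sampled with or without replacement): $u_{k+1}=u_k-\gamma\nabla L_{\mathcal B_k}(\theta_k)\odot v_k+\beta(u_k-u_{k-1})$, $v_{k+1}=v_k-\gamma\nabla L_{\mathcal B_k}(\theta_k)\odot u_k+\beta(v_k-v_{k-1})$, $\theta_k=u_k\odot v_k$, initialised with $u_1=u_0$, $v_1=v_0$. $w_{\pm,k}=u_k\pm v_k$, $\Delta_k=|u_k^2-v_k^2|$. *)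

theory Defs
  imports "HOL-Analysis.Analysis"
begin

definition rfun :: "real \<Rightarrow> real" where
  "rfun z = (z - 1) - ln \<bar>z\<bar>"

text \<open>Gradient of the batch loss L_B(theta) = 1/(2B) sum_{i in B} (y_i - <x_i,theta>)^2.
  A batch of size Bsz is an index sequence b 0, ..., b (Bsz-1) in {0..<n}
  (repetitions allowed, covering sampling with replacement).\<close>
definition batch_grad ::
  "(nat \<Rightarrow> real ^ 'd) \<Rightarrow> (nat \<Rightarrow> real) \<Rightarrow> nat \<Rightarrow> (nat \<Rightarrow> nat) \<Rightarrow> real ^ 'd \<Rightarrow> real ^ 'd" where
  "batch_grad x y Bsz b \<theta> =
     (\<chi> j. (1 / real Bsz) * (\<Sum>l<Bsz. (x (b l) \<bullet> \<theta> - y (b l)) * (x (b l) $ j)))"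

definition hadamard :: "real ^ 'd \<Rightarrow> real ^ 'd \<Rightarrow> real ^ 'd" where
  "hadamard a c = (\<chi> j. a $ j * c $ j)"

definition smgd ::
  "(nat \<Rightarrow> real ^ 'd) \<Rightarrow> (nat \<Rightarrow> real) \<Rightarrow> nat \<Rightarrow> (nat \<Rightarrow> nat \<Rightarrow> nat) \<Rightarrow> real \<Rightarrow> real
   \<Rightarrow> (nat \<Rightarrow> real ^ 'd) \<Rightarrow> (nat \<Rightarrow> real ^ 'd) \<Rightarrow> bool" where
  "smgd x y Bsz b \<gamma> \<beta> u v \<longleftrightarrow>
     u 1 = u 0 \<and> v 1 = v 0 \<and>
     (\<forall>k\<ge>1. \<forall>j.
        u (Suc k) $ j = u k $ j - \<gamma> * batch_grad x y Bsz (b k) (hadamard (u k) (v k)) $ j * v k $ j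
                        + \<beta> * (u k $ j - u (k - 1) $ j)
      \<and> v (Suc k) $ j = v k $ j - \<gamma> * batch_grad x y Bsz (b k) (hadamard (u k) (v k)) $ j * u k $ j
                        + \<beta> * (v k $ j - v (k - 1) $ j))"

end

theory Submission
  imports Defs
begin

text \<open>Write \<open>w\<^sub>\<pm>\<close> for a coordinate of \<open>u \<pm> v\<close>. Adding and subtracting the two updates shows
  \<open>w\<^sub>\<pm>(k+1) = w\<^sub>\<pm>(k) \<mp> h\<^sub>k w\<^sub>\<pm>(k) + \<beta> (w\<^sub>\<pm>(k) - w\<^sub>\<pm>(k-1))\<close> with the same \<open>h\<^sub>k\<close> for both signs.
  Along such a recursion, \<open>r(w(k+1)/w(k)) + \<beta> r(w(k)/w(k+1))\<close> equals \<open>\<mp>h\<^sub>k\<close> plus a difference of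
  consecutive values of the potential \<open>\<beta> (w(k) - w(k-1))/w(k) + (1 - \<beta>) ln |w(k)|\<close>. Hence the sum
  of the \<open>+\<close> and \<open>-\<close> terms telescopes, and converges because the iterates converge to a nonzero
  limit. Near that limit the ratios \<open>w(k+1)/w(k)\<close> are positive, where \<open>r \<ge> 0\<close>, so both series
  have eventually nonnegative terms and each converges by comparison with their sum.\<close>

definition momentum_potential :: "real \<Rightarrow> real \<Rightarrow> real \<Rightarrow> real" where
  "momentum_potential \<beta> a b = \<beta> * (b - a) / b + (1 - \<beta>) * ln \<bar>b\<bar>"

lemma rfun_nonneg:
  assumes "0 < z"
  shows "0 \<le> rfun z"
  using ln_le_minus_one[OF assms] assms by (simp add: rfun_def)

lemma rfun_momentum_step:
  fixes a b c d \<beta> :: real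
  assumes b: "b \<noteq> 0" and c: "c \<noteq> 0" and step: "c = b + d * b + \<beta> * (b - a)"
  shows "rfun (c / b) + \<beta> * rfun (b / c) = d + (momentum_potential \<beta> a b - momentum_potential \<beta> b c)"
proof -
  have ln_cb: "ln \<bar>c / b\<bar> = ln \<bar>c\<bar> - ln \<bar>b\<bar>" and ln_bc: "ln \<bar>b / c\<bar> = ln \<bar>b\<bar> - ln \<bar>c\<bar>"
    using b c by (simp_all add: abs_divide ln_div)
  have cb: "c / b - 1 = d + \<beta> * (b - a) / b" using b step by (simp add: field_simps)
  have bc: "b / c - 1 = - ((c - b) / c)" using c by (simp add: field_simps)
  show ?thesis
    unfolding rfun_def momentum_potential_def ln_cb ln_bc cb bc by (simp add: algebra_simps)
qed

lemma momentum_potential_tendsto: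
  assumes "w \<longlonglongrightarrow> L" and "L \<noteq> 0"
  shows "(\<lambda>k. momentum_potential \<beta> (w k) (w (Suc k))) \<longlonglongrightarrow> momentum_potential \<beta> L L"
  unfolding momentum_potential_def using assms by (intro tendsto_intros LIMSEQ_Suc) auto

lemma eventually_ratio_pos:
  fixes w :: "nat \<Rightarrow> real"
  assumes "w \<longlonglongrightarrow> L" and "L \<noteq> 0"
  shows "eventually (\<lambda>k. 0 < w (Suc k) / w k) sequentially"
proof -
  have "(\<lambda>k. w k / L) \<longlonglongrightarrow> 1"
    using tendsto_divide[OF assms(1) tendsto_const[of L]] assms(2) by simp
  then have pos: "eventually (\<lambda>k. 0 < w k / L) sequentially"
    by (rule order_tendstoD) simp
  have "eventually (\<lambda>k. 0 < w (Suc k) / L \<and> 0 < w k / L) sequentially"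
    using eventually_conj[OF eventually_sequentially_Suc[THEN iffD2, OF pos] pos] .
  then show ?thesis
  proof (rule eventually_mono)
    fix k assume "0 < w (Suc k) / L \<and> 0 < w k / L"
    then show "0 < w (Suc k) / w k" using assms(2) by (auto simp: zero_less_divide_iff)
  qed
qed

lemma eventually_momentum_term_nonneg:
  fixes w :: "nat \<Rightarrow> real"
  assumes "w \<longlonglongrightarrow> L" and "L \<noteq> 0" and "0 \<le> \<beta>"
  shows "eventually (\<lambda>k. 0 \<le> rfun (w (k + 2) / w (k + 1)) + \<beta> * rfun (w (k + 1) / w (k + 2)))
           sequentially"
proof -
  have "eventually (\<lambda>k. 0 < w (Suc (Suc k)) / w (Suc k)) sequentially"
    using eventually_ratio_pos[OF assms(1,2)]
    by (rule eventually_sequentially_Suc[where P = "\<lambda>k. 0 < w (Suc k) / w k", THEN iffD2])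
  then show ?thesis
  proof (rule eventually_mono)
    fix k assume "0 < w (Suc (Suc k)) / w (Suc k)"
    then have "0 < w (k + 2) / w (k + 1)" "0 < w (k + 1) / w (k + 2)"
      by (auto simp: numeral_2_eq_2 zero_less_divide_iff)
    then show "0 \<le> rfun (w (k + 2) / w (k + 1)) + \<beta> * rfun (w (k + 1) / w (k + 2))"
      using rfun_nonneg assms(3) by simp
  qed
qed

lemma summable_momentum_terms:
  fixes p m h :: "nat \<Rightarrow> real" and \<beta> L\<^sub>p L\<^sub>m :: real
  assumes step_p: "\<And>k. p (k + 2) = p (k + 1) - h k * p (k + 1) + \<beta> * (p (k + 1) - p k)"
    and step_m: "\<And>k. m (k + 2) = m (k + 1) + h k * m (k + 1) + \<beta> * (m (k + 1) - m k)"
    and nz: "\<And>k. p k \<noteq> 0" "\<And>k. m k \<noteq> 0"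
    and lim: "p \<longlonglongrightarrow> L\<^sub>p" "m \<longlonglongrightarrow> L\<^sub>m" and L: "L\<^sub>p \<noteq> 0" "L\<^sub>m \<noteq> 0"
    and \<beta>: "0 \<le> \<beta>"
  shows "summable (\<lambda>k. rfun (p (k + 2) / p (k + 1)) + \<beta> * rfun (p (k + 1) / p (k + 2)))"
    and "summable (\<lambda>k. rfun (m (k + 2) / m (k + 1)) + \<beta> * rfun (m (k + 1) / m (k + 2)))"
proof -
  define T where "T w k = rfun (w (k + 2) / w (k + 1)) + \<beta> * rfun (w (k + 1) / w (k + 2))"
    for w :: "nat \<Rightarrow> real" and k
  define \<Phi> where "\<Phi> w k = momentum_potential \<beta> (w k) (w (Suc k))" for w :: "nat \<Rightarrow> real" and k
  have T_p: "T p k = - h k + (\<Phi> p k - \<Phi> p (Suc k))" for k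
  proof -
    have "p (k + 2) = p (k + 1) + (- h k) * p (k + 1) + \<beta> * (p (k + 1) - p k)"
      using step_p[of k] by simp
    from rfun_momentum_step[OF nz(1) nz(1) this] show ?thesis
      unfolding T_def \<Phi>_def by (simp add: numeral_2_eq_2)
  qed
  have T_m: "T m k = h k + (\<Phi> m k - \<Phi> m (Suc k))" for k
    using rfun_momentum_step[OF nz(2) nz(2) step_m]
    unfolding T_def \<Phi>_def by (simp add: numeral_2_eq_2)
  have lim_\<Phi>: "(\<lambda>k. \<Phi> p k + \<Phi> m k)
          \<longlonglongrightarrow> momentum_potential \<beta> L\<^sub>p L\<^sub>p + momentum_potential \<beta> L\<^sub>m L\<^sub>m"
    unfolding \<Phi>_def by (intro tendsto_add momentum_potential_tendsto lim L)
  have "T p k + T m k = (\<Phi> p k + \<Phi> m k) - (\<Phi> p (Suc k) + \<Phi> m (Suc k))" for k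
    unfolding T_p T_m by simp
  with telescope_summable'[OF lim_\<Phi>] have sum: "summable (\<lambda>k. T p k + T m k)"
    by simp
  have nonneg: "eventually (\<lambda>k. 0 \<le> T p k \<and> 0 \<le> T m k) sequentially"
    unfolding T_def
    using eventually_momentum_term_nonneg[OF lim(1) L(1) \<beta>]
      eventually_momentum_term_nonneg[OF lim(2) L(2) \<beta>]
    by (rule eventually_conj)
  have "summable (T p)"
    by (rule summable_comparison_test_ev[OF eventually_mono[OF nonneg] sum]) simp
  moreover have "summable (T m)"
    by (rule summable_comparison_test_ev[OF eventually_mono[OF nonneg] sum]) simp
  ultimately show "summable (\<lambda>k. rfun (p (k + 2) / p (k + 1)) + \<beta> * rfun (p (k + 1) / p (k + 2)))"
    and "summable (\<lambda>k. rfun (m (k + 2) / m (k + 1)) + \<beta> * rfun (m (k + 1) / m (k + 2)))"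
    unfolding T_def .
qed

lemma sums_vec_lambda:
  assumes "\<And>j. (\<lambda>k. f k j) sums s j"
  shows "(\<lambda>k. \<chi> j. f k j) sums (\<chi> j. s j)"
proof -
  have "(\<lambda>n. \<Sum>k<n. \<chi> j. f k j) = (\<lambda>n. \<chi> j. \<Sum>k<n. f k j)"
    by (rule ext) (simp add: vec_eq_iff)
  then show ?thesis
    using assms unfolding sums_def by (simp add: tendsto_vec_lambda)
qed

lemma smgd_plus_minus_steps:
  fixes j :: "'d::finite"
  assumes "smgd x y Bsz b \<gamma> \<beta> u v"
  defines "p \<equiv> \<lambda>k. u k $ j + v k $ j" and "m \<equiv> \<lambda>k. u k $ j - v k $ j"
  obtains h where "\<And>k. p (k + 2) = p (k + 1) - h k * p (k + 1) + \<beta> * (p (k + 1) - p k)"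
    and "\<And>k. m (k + 2) = m (k + 1) + h k * m (k + 1) + \<beta> * (m (k + 1) - m k)"
proof
  define g where "g k = \<gamma> * batch_grad x y Bsz (b k) (hadamard (u k) (v k)) $ j" for k
  fix k
  have "u (k + 2) $ j = u (k + 1) $ j - g (k + 1) * v (k + 1) $ j + \<beta> * (u (k + 1) $ j - u k $ j)"
    and "v (k + 2) $ j = v (k + 1) $ j - g (k + 1) * u (k + 1) $ j + \<beta> * (v (k + 1) $ j - v k $ j)"
    using assms(1) unfolding smgd_def g_def by (simp_all add: numeral_2_eq_2)
  then show "p (k + 2) = p (k + 1) - g (k + 1) * p (k + 1) + \<beta> * (p (k + 1) - p k)"
    and "m (k + 2) = m (k + 1) + g (k + 1) * m (k + 1) + \<beta> * (m (k + 1) - m k)"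
    unfolding p_def m_def by (simp_all add: algebra_simps)
qed

lemma summable_smgd_momentum_terms:
  fixes u v :: "nat \<Rightarrow> real ^ 'd" and j :: 'd
  assumes smgd: "smgd x y Bsz b \<gamma> \<beta> u v" and \<beta>: "0 \<le> \<beta>"
    and lim_u: "(\<lambda>k. u k $ j) \<longlonglongrightarrow> a" and lim_v: "(\<lambda>k. v k $ j) \<longlonglongrightarrow> c"
    and limit_nz: "a\<^sup>2 \<noteq> c\<^sup>2"
    and nz: "\<And>k. u k $ j + v k $ j \<noteq> 0" "\<And>k. u k $ j - v k $ j \<noteq> 0"
  shows "summable (\<lambda>k. rfun ((u (k + 2) $ j + v (k + 2) $ j) / (u (k + 1) $ j + v (k + 1) $ j))
           + \<beta> * rfun ((u (k + 1) $ j + v (k + 1) $ j) / (u (k + 2) $ j + v (k + 2) $ j)))"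
    and "summable (\<lambda>k. rfun ((u (k + 2) $ j - v (k + 2) $ j) / (u (k + 1) $ j - v (k + 1) $ j))
           + \<beta> * rfun ((u (k + 1) $ j - v (k + 1) $ j) / (u (k + 2) $ j - v (k + 2) $ j)))"
proof -
  define p where "p k = u k $ j + v k $ j" for k
  define m where "m k = u k $ j - v k $ j" for k
  obtain h where steps:
      "\<And>k. p (k + 2) = p (k + 1) - h k * p (k + 1) + \<beta> * (p (k + 1) - p k)"
      "\<And>k. m (k + 2) = m (k + 1) + h k * m (k + 1) + \<beta> * (m (k + 1) - m k)"
    using smgd_plus_minus_steps[OF smgd, of j] unfolding p_def m_def by blast
  have "(a + c) * (a - c) \<noteq> 0"
    using limit_nz by (simp add: power2_eq_square algebra_simps)
  then have L: "a + c \<noteq> 0" "a - c \<noteq> 0" by simp_all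
  have lim: "p \<longlonglongrightarrow> a + c" "m \<longlonglongrightarrow> a - c"
    unfolding p_def[abs_def] m_def[abs_def] by (intro tendsto_intros lim_u lim_v)+
  have "\<And>k. p k \<noteq> 0" "\<And>k. m k \<noteq> 0"
    using nz unfolding p_def m_def by simp_all
  from summable_momentum_terms[OF steps this lim L \<beta>]
  show "summable (\<lambda>k. rfun ((u (k + 2) $ j + v (k + 2) $ j) / (u (k + 1) $ j + v (k + 1) $ j))
           + \<beta> * rfun ((u (k + 1) $ j + v (k + 1) $ j) / (u (k + 2) $ j + v (k + 2) $ j)))"
    and "summable (\<lambda>k. rfun ((u (k + 2) $ j - v (k + 2) $ j) / (u (k + 1) $ j - v (k + 1) $ j))
           + \<beta> * rfun ((u (k + 1) $ j - v (k + 1) $ j) / (u (k + 2) $ j - v (k + 2) $ j)))"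
    unfolding p_def m_def .
qed

theorem lemma2:
  fixes x :: "nat \<Rightarrow> real ^ 'd" and y :: "nat \<Rightarrow> real" and n Bsz :: nat
    and b :: "nat \<Rightarrow> nat \<Rightarrow> nat" and \<gamma> \<beta> :: real
    and u v :: "nat \<Rightarrow> real ^ 'd" and u_inf v_inf :: "real ^ 'd"
  assumes "1 \<le> Bsz" and "Bsz \<le> n"
    and "\<forall>k l. l < Bsz \<longrightarrow> b k l < n"
    and "\<gamma> > 0" and "0 \<le> \<beta>" and "\<beta> < 1"
    and "smgd x y Bsz b \<gamma> \<beta> u v"
    and "u \<longlonglongrightarrow> u_inf" and "v \<longlonglongrightarrow> v_inf"
    and "\<forall>j. \<bar>(u_inf $ j)\<^sup>2 - (v_inf $ j)\<^sup>2\<bar> \<noteq> 0"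
    and "\<forall>k j. u k $ j + v k $ j \<noteq> 0 \<and> u k $ j - v k $ j \<noteq> 0"
  shows "\<exists>S_plus S_minus :: real ^ 'd.
     ((\<lambda>k. \<chi> j. (1 / (1 - \<beta>)) *
          (rfun ((u (k + 2) $ j + v (k + 2) $ j) / (u (k + 1) $ j + v (k + 1) $ j))
           + \<beta> * rfun ((u (k + 1) $ j + v (k + 1) $ j) / (u (k + 2) $ j + v (k + 2) $ j))))
        sums S_plus)
   \<and> ((\<lambda>k. \<chi> j. (1 / (1 - \<beta>)) *
          (rfun ((u (k + 2) $ j - v (k + 2) $ j) / (u (k + 1) $ j - v (k + 1) $ j))
           + \<beta> * rfun ((u (k + 1) $ j - v (k + 1) $ j) / (u (k + 2) $ j - v (k + 2) $ j))))
        sums S_minus)"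
proof -
  have limit_nz: "(u_inf $ j)\<^sup>2 \<noteq> (v_inf $ j)\<^sup>2" for j
    using assms(10) by simp
  have nz: "u k $ j + v k $ j \<noteq> 0" "u k $ j - v k $ j \<noteq> 0" for k j
    using assms(11) by simp_all
  note summable = summable_smgd_momentum_terms[OF assms(7,5)
      tendsto_vec_nth[OF assms(8)] tendsto_vec_nth[OF assms(9)] limit_nz nz]
  show ?thesis
    by (intro exI conjI; rule sums_vec_lambda, rule summable_sums, rule summable_mult,
        use summable in blast)
qed

end
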